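(* Let $n\ge0$ and $0\le p,q,k\le n$ with $p+q\le n$. Then in $OPol_{n+1}$, $$\sum_{m=1}^{n-p-q}(-1)^{(n+k)(m+p+k)}e^{(n+1)}_{n-k+m}\,e^{(n+1)}_{n-p-q-m}=\sum_{m=1}^{n-p-q}(-1)^{(n+k)(m+q)}e^{(n+1)}_{n-p-q-m}\,e^{(n+1)}_{n-k+m}.$$
   Context: $\Bbbk$ is a field of characteristic $\neq2$. $OPol_N$ is the graded superalgebra generated by odd elements $x_1,\dots,x_N$ of degree 2 subject to $x_jx_i=-x_ix_j$ for $i\neq j$. For $r\ge0$, $e_r^{(N)}:=\sum_{1\le i_1<\dots<i_r\le N}x_{i_1}\cdots x_{i_r}\in OPol_N$ (so $e_0^{(N)}=1$ and $e^{(N)}_r=0$ for $r>N$). *)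

theory Defs
  imports Main
begin

text \<open>The odd polynomial algebra OPol_N over a field: elements are represented by their
coefficient functions on exponent vectors (variables x_0,...,x_{N-1}, i.e. the paper's
x_1,...,x_N shifted by one). A monomial x^a = x_0^{a 0} ... x_{N-1}^{a (N-1)}, and
x^a x^b = (-1)^(sum_{i>j} a_i b_j) x^(a+b), which is forced by x_j x_i = - x_i x_j (i ~= j).\<close>

type_synonym 'a opol = "(nat \<Rightarrow> nat) \<Rightarrow> 'a"

definition opol_monos :: "nat \<Rightarrow> (nat \<Rightarrow> nat) set" where
  "opol_monos N = {a. \<forall>i\<ge>N. a i = 0}"

definition opol_sign :: "nat \<Rightarrow> (nat \<Rightarrow> nat) \<Rightarrow> (nat \<Rightarrow> nat) \<Rightarrow> 'a::field" where
  "opol_sign N a b = (-1) ^ (\<Sum>i<N. \<Sum>j<i. a i * b j)"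

definition opol_mult :: "nat \<Rightarrow> 'a::field opol \<Rightarrow> 'a opol \<Rightarrow> 'a opol" where
  "opol_mult N f g = (\<lambda>c. if c \<in> opol_monos N then
     (\<Sum>a\<in>{a. a \<in> opol_monos N \<and> (\<forall>i. a i \<le> c i)}.
        opol_sign N a (\<lambda>i. c i - a i) * f a * g (\<lambda>i. c i - a i))
     else 0)"

definition opol_one :: "'a::field opol" where
  "opol_one = (\<lambda>a. if a = (\<lambda>_. 0) then 1 else 0)"

definition opol_var :: "nat \<Rightarrow> 'a::field opol" where
  "opol_var i = (\<lambda>a. if a = (\<lambda>j. if j = i then 1 else 0) then 1 else 0)"

fun opol_prodl :: "nat \<Rightarrow> 'a::field opol list \<Rightarrow> 'a opol" where
  "opol_prodl N [] = opol_one"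
| "opol_prodl N (f # fs) = opol_mult N f (opol_prodl N fs)"

definition opol_sum :: "('b \<Rightarrow> 'a::field opol) \<Rightarrow> 'b set \<Rightarrow> 'a opol" where
  "opol_sum F A = (\<lambda>c. \<Sum>x\<in>A. F x c)"

definition opol_smult :: "'a::field \<Rightarrow> 'a opol \<Rightarrow> 'a opol" where
  "opol_smult s f = (\<lambda>c. s * f c)"

definition elem_sym :: "nat \<Rightarrow> nat \<Rightarrow> 'a::field opol" where
  "elem_sym N r = opol_sum
     (\<lambda>S. opol_prodl N (map opol_var (sorted_list_of_set S)))
     {S. S \<subseteq> {..<N} \<and> card S = r}"

end

theory Submission
  imports Defs "HOL-Library.FuncSet"
begin

text \<open>At a monomial whose exponents are at most 2, with T the variables of
  exponent 2 and U those of exponent 1 (t = card T, u = card U), the coefficient of e_r e_s is a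
  signed sum over the ways of distributing U between the two factors; it equals a sign times
  (-1)^((r-t)t) times the Gaussian binomial [u choose r-t]_q at q = -1. Swapping the factors costs
  (-1)^(rs+t). Since [u choose j]_{-1} vanishes for u even and j odd, and
  [u choose 2i+1]_{-1} = [u choose 2i]_{-1} for u odd, the summands of the two sides agree up to
  the global sign (-1)^((n+k+t)u); when that sign is -1, consecutive summands of the left-hand side
  cancel in pairs.\<close>

section \<open>Monomials and elementary symmetric polynomials\<close>

definition opol_delta :: "(nat \<Rightarrow> nat) \<Rightarrow> 'a::field opol" where
  "opol_delta a = (\<lambda>c. if c = a then 1 else 0)"

definition set_mono :: "nat set \<Rightarrow> nat \<Rightarrow> nat" where
  "set_mono A = (\<lambda>i. if i \<in> A then 1 else 0)"

definition subsets_of_card :: "'b set \<Rightarrow> nat \<Rightarrow> 'b set set" where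
  "subsets_of_card U j = {A. A \<subseteq> U \<and> card A = j}"

lemma finite_subsets_of_card: "finite U \<Longrightarrow> finite (subsets_of_card U j)"
  unfolding subsets_of_card_def by (rule finite_subset[of _ "Pow U"]) auto

lemma finite_opol_divisors: "finite {a. a \<in> opol_monos N \<and> (\<forall>i. a i \<le> c i)}"
proof -
  let ?restrict = "\<lambda>f i. if i < N then f i else 0"
  have "{a. a \<in> opol_monos N \<and> (\<forall>i. a i \<le> c i)} \<subseteq> ?restrict ` PiE {..<N} (\<lambda>i. {..c i})"
  proof
    fix a assume a: "a \<in> {a. a \<in> opol_monos N \<and> (\<forall>i. a i \<le> c i)}"
    then have "a = ?restrict (restrict a {..<N})"
      by (auto simp: opol_monos_def)
    moreover have "restrict a {..<N} \<in> PiE {..<N} (\<lambda>i. {..c i})" using a by auto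
    ultimately show "a \<in> ?restrict ` PiE {..<N} (\<lambda>i. {..c i})" by blast
  qed
  then show ?thesis by (rule finite_subset) (simp add: finite_PiE)
qed

lemma opol_mult_sum_left:
  "opol_mult N (opol_sum F X) g = opol_sum (\<lambda>x. opol_mult N (F x) g) X"
  unfolding opol_mult_def opol_sum_def
  by (rule ext) (auto simp: sum_distrib_left sum_distrib_right mult.assoc intro: sum.swap)

lemma opol_mult_sum_right:
  "opol_mult N f (opol_sum F X) = opol_sum (\<lambda>x. opol_mult N f (F x)) X"
  unfolding opol_mult_def opol_sum_def
  by (rule ext) (auto simp: sum_distrib_left mult.left_commute intro: sum.swap)

lemma opol_mult_delta:
  assumes "a \<in> opol_monos N" "b \<in> opol_monos N"
  shows "opol_mult N (opol_delta a) (opol_delta b)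
       = opol_smult (opol_sign N a b) (opol_delta (\<lambda>i. a i + b i) :: 'a::field opol)"
proof (rule ext)
  fix c :: "nat \<Rightarrow> nat"
  let ?D = "{a. a \<in> opol_monos N \<and> (\<forall>i. a i \<le> c i)}"
  have in_monos: "c = (\<lambda>i. a i + b i) \<Longrightarrow> c \<in> opol_monos N"
    using assms by (auto simp: opol_monos_def)
  have "opol_mult N (opol_delta a) (opol_delta b) c = (if c \<in> opol_monos N then
      (\<Sum>a'\<in>?D. opol_sign N a' (\<lambda>i. c i - a' i) * opol_delta a a' * opol_delta b (\<lambda>i. c i - a' i))
      else 0)"
    unfolding opol_mult_def by (rule refl)
  also have "(\<Sum>a'\<in>?D. opol_sign N a' (\<lambda>i. c i - a' i) * opol_delta a a' * opol_delta b (\<lambda>i. c i - a' i))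
      = (\<Sum>a'\<in>?D. if a' = a then opol_sign N a (\<lambda>i. c i - a i) * opol_delta b (\<lambda>i. c i - a i) else 0)"
    by (rule sum.cong) (auto simp: opol_delta_def)
  also have "\<dots> = (if a \<in> ?D then opol_sign N a (\<lambda>i. c i - a i) * opol_delta b (\<lambda>i. c i - a i) else 0)"
    using finite_opol_divisors by (simp add: sum.delta')
  also have "\<dots> = (if c = (\<lambda>i. a i + b i) then opol_sign N a b else 0)"
  proof -
    have "(a \<in> ?D \<and> (\<lambda>i. c i - a i) = b) \<longleftrightarrow> c = (\<lambda>i. a i + b i)"
      using assms(1) by (auto simp: fun_eq_iff) (metis le_add_diff_inverse)
    then show ?thesis by (auto simp: opol_delta_def)
  qed
  finally show "opol_mult N (opol_delta a) (opol_delta b) c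
      = opol_smult (opol_sign N a b) (opol_delta (\<lambda>i. a i + b i)) c"
    using in_monos by (auto simp: opol_smult_def opol_delta_def)
qed

lemma set_mono_in_monos: "A \<subseteq> {..<N} \<Longrightarrow> set_mono A \<in> opol_monos N"
  by (auto simp: set_mono_def opol_monos_def)

lemma opol_prodl_sorted_vars:
  assumes "sorted_wrt (<) xs" "set xs \<subseteq> {..<N}"
  shows "opol_prodl N (map opol_var xs) = (opol_delta (set_mono (set xs)) :: 'a::field opol)"
  using assms
proof (induction xs)
  case Nil
  show ?case by (simp add: opol_one_def opol_delta_def set_mono_def)
next
  case (Cons x xs)
  have later: "y \<in> set xs \<Longrightarrow> x < y" for y using Cons.prems by auto
  have var: "(opol_var x :: 'a opol) = opol_delta (set_mono {x})"
    by (rule ext) (simp add: opol_var_def opol_delta_def set_mono_def)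
  have sign: "opol_sign N (set_mono {x}) (set_mono (set xs)) = (1::'a)"
  proof -
    have "(\<Sum>i<N. \<Sum>j<i. set_mono {x} i * set_mono (set xs) j) = 0"
      using later by (force simp: set_mono_def intro!: sum.neutral dest: less_asym)
    then show ?thesis unfolding opol_sign_def by (simp only: power_0)
  qed
  have "(\<lambda>i. set_mono {x} i + set_mono (set xs) i) = set_mono (set (x # xs))"
    using later by (auto simp: set_mono_def fun_eq_iff)
  with Cons var sign show ?case
    by (simp add: opol_mult_delta set_mono_in_monos opol_smult_def)
qed

lemma elem_sym_eq_sum_delta:
  "elem_sym N r = opol_sum (\<lambda>S. opol_delta (set_mono S)) (subsets_of_card {..<N} r)"
  unfolding elem_sym_def subsets_of_card_def opol_sum_def
proof (intro ext sum.cong refl)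
  fix S c assume "S \<in> {S. S \<subseteq> {..<N} \<and> card S = r}"
  then have "S \<subseteq> {..<N}" "finite S" using finite_subset by auto
  then show "opol_prodl N (map opol_var (sorted_list_of_set S)) c = opol_delta (set_mono S) c"
    by (simp add: opol_prodl_sorted_vars)
qed

section \<open>Inversion counts\<close>

lemma neg_one_power_parity_cong: "even a = even b \<Longrightarrow> (-1::'a::ring_1) ^ a = (-1) ^ b"
  by (simp add: minus_one_power_iff)

definition inversions :: "nat set \<Rightarrow> nat set \<Rightarrow> nat" where
  "inversions A B = card {(i, j). i \<in> A \<and> j \<in> B \<and> j < i}"

lemma opol_sign_set_mono:
  assumes "A \<subseteq> {..<N}" "finite B"
  shows "opol_sign N (set_mono A) (set_mono B) = ((-1::'a::field) ^ inversions A B)"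
proof -
  have "(\<Sum>i<N. \<Sum>j<i. set_mono A i * set_mono B j) = (\<Sum>i<N. if i \<in> A then card {j\<in>B. j < i} else 0)"
  proof (rule sum.cong)
    fix i
    have "(\<Sum>j<i. set_mono B j) = card ({..<i} \<inter> B)"
      by (simp add: set_mono_def sum.If_cases)
    also have "{..<i} \<inter> B = {j\<in>B. j < i}" by auto
    finally show "(\<Sum>j<i. set_mono A i * set_mono B j) = (if i \<in> A then card {j\<in>B. j < i} else 0)"
      by (simp add: set_mono_def)
  qed simp
  also have "\<dots> = (\<Sum>i\<in>A. card {j\<in>B. j < i})"
    using assms(1) by (simp add: sum.If_cases Int_absorb1)
  also have "\<dots> = card (Sigma A (\<lambda>i. {j\<in>B. j < i}))"
    using assms finite_subset by (subst card_SigmaI) auto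
  also have "Sigma A (\<lambda>i. {j\<in>B. j < i}) = {(i, j). i \<in> A \<and> j \<in> B \<and> j < i}" by auto
  finally show ?thesis by (simp add: opol_sign_def inversions_def)
qed

lemma finite_inversion_pairs:
  "finite A \<Longrightarrow> finite B \<Longrightarrow> finite {(i, j). i \<in> A \<and> j \<in> B \<and> j < i}"
  by (rule finite_subset[of _ "A \<times> B"]) auto

lemma inversions_Un_left:
  assumes "finite X" "finite Y" "finite Z" "X \<inter> Y = {}"
  shows "inversions (X \<union> Y) Z = inversions X Z + inversions Y Z"
proof -
  have "{(i, j). i \<in> X \<union> Y \<and> j \<in> Z \<and> j < i}
      = {(i, j). i \<in> X \<and> j \<in> Z \<and> j < i} \<union> {(i, j). i \<in> Y \<and> j \<in> Z \<and> j < i}" by auto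
  then show ?thesis
    unfolding inversions_def using assms
    by (simp add: card_Un_disjoint finite_inversion_pairs disjoint_iff)
qed

lemma inversions_Un_right:
  assumes "finite X" "finite Y" "finite Z" "Y \<inter> Z = {}"
  shows "inversions X (Y \<union> Z) = inversions X Y + inversions X Z"
proof -
  have "{(i, j). i \<in> X \<and> j \<in> Y \<union> Z \<and> j < i}
      = {(i, j). i \<in> X \<and> j \<in> Y \<and> j < i} \<union> {(i, j). i \<in> X \<and> j \<in> Z \<and> j < i}" by auto
  then show ?thesis
    unfolding inversions_def using assms
    by (simp add: card_Un_disjoint finite_inversion_pairs disjoint_iff)
qed

lemma inversions_swap:
  assumes "finite A" "finite B"
  shows "inversions A B + inversions B A + card (A \<inter> B) = card A * card B"
proof -
  let ?greater = "{(i, j). i \<in> A \<and> j \<in> B \<and> j < i}"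
  let ?less = "{(i, j). i \<in> A \<and> j \<in> B \<and> i < j}"
  let ?diag = "{(i, j). i \<in> A \<and> j \<in> B \<and> i = j}"
  have split: "A \<times> B = ?greater \<union> ?less \<union> ?diag" by auto
  have "finite ?greater" "finite ?less" "finite ?diag"
    using assms by (auto intro: finite_subset[of _ "A \<times> B"])
  then have "card A * card B = inversions A B + card ?less + card ?diag"
    unfolding card_cartesian_product[symmetric] split inversions_def
    by (subst card_Un_disjoint, auto)+
  moreover have "card ?less = inversions B A"
  proof -
    have "?less = prod.swap ` {(i, j). i \<in> B \<and> j \<in> A \<and> j < i}" by auto
    then show ?thesis unfolding inversions_def by (simp add: card_image)
  qed
  moreover have "card ?diag = card (A \<inter> B)"
  proof -
    have "?diag = (\<lambda>i. (i, i)) ` (A \<inter> B)" by auto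
    then show ?thesis by (simp add: card_image inj_on_def)
  qed
  ultimately show ?thesis by simp
qed

lemma inversions_insert_max_left:
  assumes "finite A" "finite B" "x \<notin> A" "\<forall>j\<in>B. j < x"
  shows "inversions (insert x A) B = inversions A B + card B"
proof -
  have "{(i, j). i \<in> {x} \<and> j \<in> B \<and> j < i} = Pair x ` B" using assms(4) by auto
  then have "inversions {x} B = card B" unfolding inversions_def by (simp add: card_image inj_on_def)
  then show ?thesis
    using inversions_Un_left[of "{x}" A B] assms by simp
qed

lemma inversions_insert_max_right:
  assumes "\<forall>i\<in>A. i \<le> x"
  shows "inversions A (insert x B) = inversions A B"
proof -
  have "{(i, j). i \<in> A \<and> j \<in> insert x B \<and> j < i} = {(i, j). i \<in> A \<and> j \<in> B \<and> j < i}"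
    using assms by auto
  then show ?thesis unfolding inversions_def by simp
qed

text \<open>Modulo 2, the right-hand side depends on A only through card A and inversions A (U - A).\<close>
lemma inversions_split:
  assumes "finite T" "finite U" "T \<inter> U = {}" "A \<subseteq> U"
  shows "inversions (T \<union> A) (T \<union> (U - A)) + 2 * inversions T A
       = inversions T T + inversions T U + card A * card T + inversions A (U - A)"
proof -
  have fin: "finite A" "finite (U - A)" using assms finite_subset by auto
  have disj: "T \<inter> A = {}" "T \<inter> (U - A) = {}" "A \<inter> (U - A) = {}" using assms by auto
  have "inversions (T \<union> A) (T \<union> (U - A))
      = inversions T T + inversions T (U - A) + inversions A T + inversions A (U - A)"
    using assms fin disj by (simp add: inversions_Un_left inversions_Un_right)
  moreover have "inversions T (U - A) + inversions T A = inversions T U"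
    using inversions_Un_right[of T A "U - A"] assms fin disj by (simp add: Un_absorb1)
  moreover have "inversions A T + inversions T A = card A * card T"
    using inversions_swap[of A T] fin assms disj by (simp add: Int_commute)
  ultimately show ?thesis by simp
qed

section \<open>Gaussian binomial coefficients at q = -1\<close>

text \<open>The Gaussian binomial coefficient [card U choose j]_q, read as a sum of q^(inversions)
  over the j-subsets of U, evaluated at q = -1.\<close>
definition gbinom_neg1 :: "nat set \<Rightarrow> nat \<Rightarrow> 'a::field" where
  "gbinom_neg1 U j = (\<Sum>A\<in>subsets_of_card U j. (-1) ^ inversions A (U - A))"

lemma gbinom_neg1_0: "finite U \<Longrightarrow> gbinom_neg1 U 0 = 1"
proof -
  assume "finite U"
  then have "subsets_of_card U 0 = {{}}"
    by (auto simp: subsets_of_card_def card_eq_0_iff intro: finite_subset)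
  then show ?thesis by (simp add: gbinom_neg1_def inversions_def)
qed

lemma gbinom_neg1_eq_0:
  assumes "finite U" "card U < j"
  shows "gbinom_neg1 U j = 0"
proof -
  have "subsets_of_card U j = {}"
    using assms card_mono[OF assms(1)] by (auto simp: subsets_of_card_def leD)
  then show ?thesis by (simp add: gbinom_neg1_def)
qed

lemma subsets_of_card_insert:
  assumes "finite U" "x \<notin> U"
  shows "subsets_of_card (insert x U) (Suc j)
       = subsets_of_card U (Suc j) \<union> insert x ` subsets_of_card U j"
proof (intro set_eqI iffI)
  fix A assume "A \<in> subsets_of_card (insert x U) (Suc j)"
  then have A: "A \<subseteq> insert x U" "card A = Suc j" "finite A"
    using assms finite_subset by (auto simp: subsets_of_card_def)
  show "A \<in> subsets_of_card U (Suc j) \<union> insert x ` subsets_of_card U j"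
  proof (cases "x \<in> A")
    case True
    then have "A = insert x (A - {x})" "A - {x} \<in> subsets_of_card U j"
      using A by (auto simp: subsets_of_card_def)
    then show ?thesis by blast
  next
    case False
    then show ?thesis using A by (auto simp: subsets_of_card_def)
  qed
next
  fix A assume "A \<in> subsets_of_card U (Suc j) \<union> insert x ` subsets_of_card U j"
  then show "A \<in> subsets_of_card (insert x U) (Suc j)"
  proof
    assume "A \<in> insert x ` subsets_of_card U j"
    then obtain A' where "A = insert x A'" "A' \<subseteq> U" "card A' = j" "finite A'"
      using assms(1) finite_subset by (auto simp: subsets_of_card_def)
    moreover have "x \<notin> A'" using \<open>A' \<subseteq> U\<close> assms(2) by blast
    ultimately show ?thesis by (auto simp: subsets_of_card_def)
  qed (auto simp: subsets_of_card_def)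
qed

lemma gbinom_neg1_insert_max:
  assumes "finite U" "\<forall>y\<in>U. y < x"
  shows "gbinom_neg1 (insert x U) (Suc j)
       = gbinom_neg1 U (Suc j) + (-1) ^ (card U - j) * (gbinom_neg1 U j :: 'a::field)"
proof -
  have x: "x \<notin> U" using assms by auto
  let ?f = "\<lambda>A. (-1::'a) ^ inversions A (insert x U - A)"
  have "gbinom_neg1 (insert x U) (Suc j)
      = sum ?f (subsets_of_card U (Suc j)) + sum ?f (insert x ` subsets_of_card U j)"
    unfolding gbinom_neg1_def subsets_of_card_insert[OF assms(1) x]
    using x by (intro sum.union_disjoint) (auto simp: finite_subsets_of_card assms(1) subsets_of_card_def)
  also have "sum ?f (subsets_of_card U (Suc j)) = gbinom_neg1 U (Suc j)"
    unfolding gbinom_neg1_def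
  proof (rule sum.cong[OF refl])
    fix A assume "A \<in> subsets_of_card U (Suc j)"
    then have "insert x U - A = insert x (U - A)" "\<forall>i\<in>A. i \<le> x"
      using x assms(2) by (auto simp: subsets_of_card_def less_imp_le)
    then show "?f A = (-1) ^ inversions A (U - A)" by (simp add: inversions_insert_max_right)
  qed
  also have "sum ?f (insert x ` subsets_of_card U j) = (-1) ^ (card U - j) * gbinom_neg1 U j"
    unfolding gbinom_neg1_def sum_distrib_left
  proof (subst sum.reindex)
    show "inj_on (insert x) (subsets_of_card U j)"
      using x by (auto simp: inj_on_def subsets_of_card_def)
  next
    show "sum (?f \<circ> insert x) (subsets_of_card U j)
        = (\<Sum>A\<in>subsets_of_card U j. (-1) ^ (card U - j) * (-1) ^ inversions A (U - A))"
    proof (rule sum.cong[OF refl])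
      fix A assume "A \<in> subsets_of_card U j"
      then have A: "A \<subseteq> U" "card A = j" "finite A"
        using assms(1) finite_subset by (auto simp: subsets_of_card_def)
      have "insert x U - insert x A = U - A" using x by auto
      moreover have "inversions (insert x A) (U - A) = inversions A (U - A) + (card U - j)"
        using A x assms by (subst inversions_insert_max_left) (auto simp: card_Diff_subset)
      ultimately show "(?f \<circ> insert x) A = (-1) ^ (card U - j) * (-1) ^ inversions A (U - A)"
        by (simp add: power_add)
    qed
  qed
  finally show ?thesis .
qed

lemma gbinom_neg1_parity:
  assumes "finite U"
  shows "(even (card U) \<longrightarrow> gbinom_neg1 U (Suc (2 * i)) = (0::'a::field))
       \<and> (odd (card U) \<longrightarrow> gbinom_neg1 U (Suc (2 * i)) = (gbinom_neg1 U (2 * i) :: 'a))"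
  using assms
proof (induction U arbitrary: i rule: finite_linorder_max_induct)
  case empty
  show ?case by (simp add: gbinom_neg1_eq_0)
next
  case (insert x U)
  have card: "card (insert x U) = Suc (card U)"
    using insert by (auto intro: card_insert_disjoint)
  note step = gbinom_neg1_insert_max[OF insert.hyps(1,2), where 'a='a]
  note small = gbinom_neg1_eq_0[OF insert.hyps(1), where 'a='a]
  show ?case
  proof (cases "even (card U)")
    case True
    have odd_vanishes: "gbinom_neg1 U (Suc (2 * i')) = (0::'a)" for i'
      using insert.IH True by blast
    have "gbinom_neg1 (insert x U) (2 * i) = (gbinom_neg1 U (2 * i) :: 'a)"
    proof (cases i)
      case 0
      then show ?thesis using insert.hyps(1) by (simp add: gbinom_neg1_0)
    next
      case (Suc i')
      then show ?thesis using step[of "Suc (2 * i')"] odd_vanishes[of i'] by simp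
    qed
    moreover have "gbinom_neg1 (insert x U) (Suc (2 * i)) = (gbinom_neg1 U (2 * i) :: 'a)"
      using True step[of "2 * i"] odd_vanishes[of i] small[of "2 * i"]
      by (cases "2 * i \<le> card U") auto
    ultimately show ?thesis using card True by simp
  next
    case False
    have "gbinom_neg1 (insert x U) (Suc (2 * i)) = (0::'a)"
    proof (cases "2 * i \<le> card U")
      case True
      then have "odd (card U - 2 * i)" using False by simp
      then show ?thesis using step[of "2 * i"] insert.IH[of i] False by simp
    next
      case False
      then show ?thesis using step[of "2 * i"] small[of "2 * i"] small[of "Suc (2 * i)"] by simp
    qed
    then show ?thesis using card False by simp
  qed
qed

section \<open>Coefficients of e_r e_s\<close>

definition splittings :: "nat \<Rightarrow> nat \<Rightarrow> nat \<Rightarrow> (nat \<Rightarrow> nat) \<Rightarrow> (nat set \<times> nat set) set" where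
  "splittings N r s c = {(A, B). A \<in> subsets_of_card {..<N} r \<and> B \<in> subsets_of_card {..<N} s
     \<and> c = (\<lambda>i. set_mono A i + set_mono B i)}"

definition elem_sym_prod_coeff :: "nat \<Rightarrow> nat \<Rightarrow> nat \<Rightarrow> (nat \<Rightarrow> nat) \<Rightarrow> 'a::field" where
  "elem_sym_prod_coeff N r s c = (\<Sum>(A, B)\<in>splittings N r s c. (-1) ^ inversions A B)"

lemma opol_mult_elem_sym:
  "opol_mult N (elem_sym N r) (elem_sym N s) = (\<lambda>c. elem_sym_prod_coeff N r s c :: 'a::field)"
proof (rule ext)
  fix c
  let ?X = "subsets_of_card {..<N} r" and ?Y = "subsets_of_card {..<N} s"
  let ?split = "\<lambda>(A, B). c = (\<lambda>i. set_mono A i + set_mono B i)"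
  have "opol_mult N (elem_sym N r) (elem_sym N s) c
      = (\<Sum>A\<in>?X. \<Sum>B\<in>?Y. opol_mult N (opol_delta (set_mono A)) (opol_delta (set_mono B)) c :: 'a)"
    by (simp only: elem_sym_eq_sum_delta opol_mult_sum_left opol_mult_sum_right)
      (simp add: opol_sum_def, rule sum.swap)
  also have "\<dots> = (\<Sum>(A, B)\<in>?X \<times> ?Y. if ?split (A, B) then (-1::'a) ^ inversions A B else 0)"
    unfolding sum.cartesian_product
  proof (rule sum.cong[OF refl], clarify)
    fix A B assume "A \<in> ?X" "B \<in> ?Y"
    then have "A \<subseteq> {..<N}" "B \<subseteq> {..<N}" "finite B"
      by (auto simp: subsets_of_card_def finite_subset)
    then have "opol_mult N (opol_delta (set_mono A)) (opol_delta (set_mono B))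
        = opol_smult ((-1::'a) ^ inversions A B) (opol_delta (\<lambda>i. set_mono A i + set_mono B i))"
      by (simp add: opol_mult_delta set_mono_in_monos opol_sign_set_mono)
    then show "opol_mult N (opol_delta (set_mono A)) (opol_delta (set_mono B)) c
        = (if c = (\<lambda>i. set_mono A i + set_mono B i) then (-1::'a) ^ inversions A B else 0)"
      by (simp add: opol_smult_def opol_delta_def)
  qed
  also have "\<dots> = (\<Sum>(A, B)\<in>{p \<in> ?X \<times> ?Y. ?split p}. (-1::'a) ^ inversions A B)"
    by (subst sum.inter_filter) (auto simp: finite_subsets_of_card intro!: sum.cong split: prod.splits)
  also have "{p \<in> ?X \<times> ?Y. ?split p} = splittings N r s c"
    by (auto simp: splittings_def)
  finally show "opol_mult N (elem_sym N r) (elem_sym N s) c = (elem_sym_prod_coeff N r s c :: 'a)"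
    by (simp add: elem_sym_prod_coeff_def)
qed

definition twos :: "(nat \<Rightarrow> nat) \<Rightarrow> nat set" where
  "twos c = {i. c i = 2}"

definition ones :: "(nat \<Rightarrow> nat) \<Rightarrow> nat set" where
  "ones c = {i. c i = 1}"

definition mono_le_two :: "nat \<Rightarrow> (nat \<Rightarrow> nat) \<Rightarrow> bool" where
  "mono_le_two N c \<longleftrightarrow> c \<in> opol_monos N \<and> (\<forall>i. c i \<le> 2)"

lemma twos_ones_disjoint: "twos c \<inter> ones c = {}"
  by (auto simp: twos_def ones_def)

lemma mono_le_two_iff: "mono_le_two N c \<longleftrightarrow> (\<forall>i. c i \<le> 2) \<and> twos c \<union> ones c \<subseteq> {..<N}"
proof -
  have in_monos: "c \<in> opol_monos N \<longleftrightarrow> (\<forall>i. c i \<noteq> 0 \<longrightarrow> i < N)"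
    unfolding opol_monos_def mem_Collect_eq using not_less by blast
  have "(\<forall>i. c i \<le> 2) \<Longrightarrow> c i \<noteq> 0 \<longleftrightarrow> i \<in> twos c \<union> ones c" for i
    by (auto simp: twos_def ones_def dest: spec[of _ i])
  then show ?thesis
    unfolding mono_le_two_def in_monos by blast
qed

lemma finite_twos_ones:
  "mono_le_two N c \<Longrightarrow> finite (twos c) \<and> finite (ones c)"
  by (auto simp: mono_le_two_iff intro: finite_subset)

lemma set_mono_add_eq_iff:
  "c = (\<lambda>i. set_mono A i + set_mono B i)
   \<longleftrightarrow> (\<forall>i. c i \<le> 2) \<and> twos c \<subseteq> A \<and> A \<subseteq> twos c \<union> ones c \<and> B = twos c \<union> (ones c - A)"
proof
  assume "c = (\<lambda>i. set_mono A i + set_mono B i)"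
  then show "(\<forall>i. c i \<le> 2) \<and> twos c \<subseteq> A \<and> A \<subseteq> twos c \<union> ones c \<and> B = twos c \<union> (ones c - A)"
    by (auto simp: set_mono_def twos_def ones_def split: if_splits)
next
  assume *: "(\<forall>i. c i \<le> 2) \<and> twos c \<subseteq> A \<and> A \<subseteq> twos c \<union> ones c \<and> B = twos c \<union> (ones c - A)"
  show "c = (\<lambda>i. set_mono A i + set_mono B i)"
  proof
    fix i
    have "c i = 0 \<or> i \<in> ones c \<or> i \<in> twos c"
      using *[THEN conjunct1, rule_format, of i] by (auto simp: twos_def ones_def)
    then show "c i = set_mono A i + set_mono B i"
      using * by (auto simp: set_mono_def twos_def ones_def)
  qed
qed

lemma card_complement_parts:
  assumes "finite T" "finite U" "T \<inter> U = {}" "T \<subseteq> A" "A \<subseteq> T \<union> U"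
  shows "card A = card T + card (A - T)" "card (A - T) \<le> card U"
    "card (T \<union> (U - A)) = card T + card U - card (A - T)"
proof -
  have fin: "finite A" using assms finite_subset by blast
  have "A = T \<union> (A - T)" using assms by blast
  then show "card A = card T + card (A - T)"
    using fin assms by (metis card_Un_disjoint Diff_disjoint finite_Diff)
  have sub: "A - T \<subseteq> U" using assms by blast
  then show le: "card (A - T) \<le> card U" using assms card_mono by blast
  have "U - A = U - (A - T)" using assms by blast
  then have "card (U - A) = card U - card (A - T)"
    using sub fin by (simp add: card_Diff_subset)
  moreover have "card (T \<union> (U - A)) = card T + card (U - A)"
    using assms by (intro card_Un_disjoint) auto
  ultimately show "card (T \<union> (U - A)) = card T + card U - card (A - T)"
    using le by simp
qed

lemma mem_splittings_iff:
  "(A, B) \<in> splittings N r s c \<longleftrightarrow> mono_le_two N c \<and> twos c \<subseteq> A \<and> A \<subseteq> twos c \<union> ones c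
     \<and> B = twos c \<union> (ones c - A) \<and> card A = r \<and> card B = s"
  unfolding splittings_def subsets_of_card_def mem_Collect_eq prod.case set_mono_add_eq_iff mono_le_two_iff
  by blast

lemma splittings_eq:
  "splittings N r s c = (if mono_le_two N c \<and> card (twos c) \<le> r
       \<and> r + s = 2 * card (twos c) + card (ones c)
     then (\<lambda>A'. (twos c \<union> A', twos c \<union> (ones c - A'))) ` subsets_of_card (ones c) (r - card (twos c))
     else {})"
proof -
  let ?T = "twos c" and ?U = "ones c"
  let ?cond = "mono_le_two N c \<and> card ?T \<le> r \<and> r + s = 2 * card ?T + card ?U"
  have split_cond: "?cond \<and> A - ?T \<in> subsets_of_card ?U (r - card ?T)
      \<and> (A, B) = (?T \<union> (A - ?T), ?T \<union> (?U - (A - ?T)))"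
    if "(A, B) \<in> splittings N r s c" for A B
  proof -
    note mem = that[unfolded mem_splittings_iff]
    note cards = card_complement_parts[OF _ _ twos_ones_disjoint[of c], where A = A]
    show ?thesis
      using mem cards finite_twos_ones[of N c]
      by (auto simp: subsets_of_card_def)
  qed
  show ?thesis
  proof (cases ?cond)
    case False
    have "p \<notin> splittings N r s c" for p
      using split_cond[of "fst p" "snd p"] False by auto
    then show ?thesis using False by auto
  next
    case True
    have "(?T \<union> A', ?T \<union> (?U - A')) \<in> splittings N r s c"
      if "A' \<in> subsets_of_card ?U (r - card ?T)" for A'
    proof -
      have A': "A' \<subseteq> ?U" "card A' = r - card ?T" using that by (auto simp: subsets_of_card_def)
      have fin: "finite ?T" "finite ?U" using True finite_twos_ones by blast+
      have parts: "?T \<subseteq> ?T \<union> A'" "?T \<union> A' \<subseteq> ?T \<union> ?U" "?T \<union> A' - ?T = A'"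
        using A'(1) twos_ones_disjoint by auto
      note cards = card_complement_parts[OF fin twos_ones_disjoint parts(1,2), unfolded parts(3)]
      have "card (?T \<union> A') = r" "card (?T \<union> (?U - (?T \<union> A'))) = s"
        using cards A'(2) True by auto
      moreover have "?U - (?T \<union> A') = ?U - A'" using twos_ones_disjoint by blast
      ultimately show ?thesis
        using True parts by (simp add: mem_splittings_iff)
    qed
    moreover have "p \<in> (\<lambda>A'. (?T \<union> A', ?T \<union> (?U - A'))) ` subsets_of_card ?U (r - card ?T)"
      if "p \<in> splittings N r s c" for p
      using split_cond[of "fst p" "snd p"] that by (intro image_eqI[of _ _ "fst p - ?T"]) auto
    ultimately show ?thesis using True by auto
  qed
qed

lemma elem_sym_prod_coeff_eq:
  "elem_sym_prod_coeff N r s c =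
    (if mono_le_two N c \<and> card (twos c) \<le> r \<and> r + s = 2 * card (twos c) + card (ones c)
     then (-1) ^ (inversions (twos c) (twos c) + inversions (twos c) (ones c)
                  + (r - card (twos c)) * card (twos c))
          * gbinom_neg1 (ones c) (r - card (twos c))
     else (0::'a::field))"
proof (cases "mono_le_two N c \<and> card (twos c) \<le> r \<and> r + s = 2 * card (twos c) + card (ones c)")
  case False
  then show ?thesis
    unfolding elem_sym_prod_coeff_def splittings_eq if_not_P[OF False] by simp
next
  case True
  let ?T = "twos c" and ?U = "ones c" and ?j = "r - card (twos c)"
  let ?\<kappa> = "inversions ?T ?T + inversions ?T ?U"
  have fin: "finite ?T" "finite ?U" using True finite_twos_ones by blast+
  have "inj_on (\<lambda>A'. (?T \<union> A', ?T \<union> (?U - A'))) (subsets_of_card ?U ?j)"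
    using twos_ones_disjoint[of c] by (auto simp: inj_on_def subsets_of_card_def)
  then have "elem_sym_prod_coeff N r s c
      = (\<Sum>A'\<in>subsets_of_card ?U ?j. (-1::'a) ^ inversions (?T \<union> A') (?T \<union> (?U - A')))"
    using True by (simp add: elem_sym_prod_coeff_def splittings_eq sum.reindex)
  also have "\<dots> = (\<Sum>A'\<in>subsets_of_card ?U ?j. (-1) ^ (?\<kappa> + ?j * card ?T) * (-1) ^ inversions A' (?U - A'))"
  proof (rule sum.cong[OF refl])
    fix A' assume "A' \<in> subsets_of_card ?U ?j"
    then have "A' \<subseteq> ?U" "card A' = ?j" by (auto simp: subsets_of_card_def)
    then have "even (inversions (?T \<union> A') (?T \<union> (?U - A')))
        = even (?\<kappa> + ?j * card ?T + inversions A' (?U - A'))"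
      using inversions_split[OF fin twos_ones_disjoint, of A'] by presburger
    then show "(-1::'a) ^ inversions (?T \<union> A') (?T \<union> (?U - A'))
        = (-1) ^ (?\<kappa> + ?j * card ?T) * (-1) ^ inversions A' (?U - A')"
      unfolding power_add[symmetric] by (rule neg_one_power_parity_cong)
  qed
  finally show ?thesis
    using True by (simp add: gbinom_neg1_def sum_distrib_left)
qed

lemma elem_sym_prod_coeff_swap:
  "elem_sym_prod_coeff N s r c = (-1) ^ (r * s + card (twos c)) * (elem_sym_prod_coeff N r s c :: 'a::field)"
proof -
  have "splittings N s r c = prod.swap ` splittings N r s c"
    by (auto simp: splittings_def add.commute image_iff)
  then have "elem_sym_prod_coeff N s r c = (\<Sum>(A, B)\<in>splittings N r s c. (-1::'a) ^ inversions B A)"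
    by (simp add: elem_sym_prod_coeff_def sum.reindex split_def)
  also have "\<dots> = (\<Sum>(A, B)\<in>splittings N r s c. (-1) ^ (r * s + card (twos c)) * (-1) ^ inversions A B)"
  proof (rule sum.cong[OF refl], clarify)
    fix A B assume "(A, B) \<in> splittings N r s c"
    then have AB: "twos c \<subseteq> A" "A \<subseteq> twos c \<union> ones c" "B = twos c \<union> (ones c - A)"
        "card A = r" "card B = s" "finite (twos c)" "finite (ones c)"
      using finite_twos_ones by (auto simp: mem_splittings_iff)
    then have "A \<inter> B = twos c" "finite A" "finite B"
      using twos_ones_disjoint[of c] by (auto intro: finite_subset)
    then have swap: "inversions A B + inversions B A + card (twos c) = r * s"
      using inversions_swap[of A B] AB by simp
    have "even (inversions B A) = even (r * s + card (twos c) + inversions A B)"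
      by (simp flip: swap) argo
    then show "(-1::'a) ^ inversions B A = (-1) ^ (r * s + card (twos c)) * (-1) ^ inversions A B"
      unfolding power_add[symmetric] by (rule neg_one_power_parity_cong)
  qed
  finally show ?thesis
    by (simp add: elem_sym_prod_coeff_def sum_distrib_left split_def)
qed

lemma elem_sym_prod_coeff_nonzero:
  assumes "elem_sym_prod_coeff N r s c \<noteq> (0::'a::field)"
  shows "card (twos c) \<le> r \<and> r \<le> card (twos c) + card (ones c)
    \<and> r + s = 2 * card (twos c) + card (ones c)"
proof -
  have cond: "mono_le_two N c \<and> card (twos c) \<le> r \<and> r + s = 2 * card (twos c) + card (ones c)"
    and "gbinom_neg1 (ones c) (r - card (twos c)) \<noteq> (0::'a)"
    using assms by (auto simp: elem_sym_prod_coeff_eq split: if_splits)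
  then have "r - card (twos c) \<le> card (ones c)"
    using gbinom_neg1_eq_0 finite_twos_ones by (metis not_le)
  with cond show ?thesis by linarith
qed

lemma elem_sym_prod_coeff_eq_0_parity:
  assumes "even (card (ones c))" "odd (r + card (twos c))"
  shows "elem_sym_prod_coeff N r s c = (0::'a::field)"
proof (rule ccontr)
  assume nz: "elem_sym_prod_coeff N r s c \<noteq> (0::'a)"
  then have cond: "mono_le_two N c" "card (twos c) \<le> r"
    by (auto simp: elem_sym_prod_coeff_eq split: if_splits)
  have "odd (r - card (twos c))" using assms(2) cond(2) by simp
  then obtain i where "r - card (twos c) = Suc (2 * i)" by (metis oddE Suc_eq_plus1)
  then have "gbinom_neg1 (ones c) (r - card (twos c)) = (0::'a)"
    using gbinom_neg1_parity[of "ones c" i] assms(1) cond(1) finite_twos_ones by auto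
  with nz show False by (simp add: elem_sym_prod_coeff_eq split: if_splits)
qed

lemma elem_sym_prod_coeff_shift:
  assumes "odd (card (ones c))" "even (r + card (twos c))" "0 < s"
  shows "elem_sym_prod_coeff N (Suc r) (s - 1) c = (-1) ^ card (twos c) * (elem_sym_prod_coeff N r s c :: 'a::field)"
proof (cases "mono_le_two N c \<and> card (twos c) \<le> r \<and> r + s = 2 * card (twos c) + card (ones c)")
  case True
  have "even (r - card (twos c))" using assms(2) by simp
  then obtain i where i: "r - card (twos c) = 2 * i" by (rule evenE)
  then have j: "Suc r - card (twos c) = Suc (2 * i)" using True by (simp add: Suc_diff_le)
  have "mono_le_two N c \<and> card (twos c) \<le> Suc r
      \<and> Suc r + (s - 1) = 2 * card (twos c) + card (ones c)"
    using True assms(3) by auto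
  then have "elem_sym_prod_coeff N (Suc r) (s - 1) c
      = (-1) ^ (inversions (twos c) (twos c) + inversions (twos c) (ones c) + Suc (2 * i) * card (twos c))
        * (gbinom_neg1 (ones c) (Suc (2 * i)) :: 'a)"
    unfolding elem_sym_prod_coeff_eq[of N "Suc r"] j by (rule if_P)
  moreover have "elem_sym_prod_coeff N r s c
      = (-1) ^ (inversions (twos c) (twos c) + inversions (twos c) (ones c) + 2 * i * card (twos c))
        * (gbinom_neg1 (ones c) (2 * i) :: 'a)"
    unfolding elem_sym_prod_coeff_eq[of N r] i using True by (rule if_P)
  moreover have "gbinom_neg1 (ones c) (Suc (2 * i)) = (gbinom_neg1 (ones c) (2 * i) :: 'a)"
    using gbinom_neg1_parity[of "ones c" i] assms(1) True finite_twos_ones by auto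
  ultimately show ?thesis by (simp add: power_add)
next
  case False
  have "card (twos c) \<noteq> Suc r" using assms(2) by auto
  then have shifted: "\<not> (mono_le_two N c \<and> card (twos c) \<le> Suc r
      \<and> Suc r + (s - 1) = 2 * card (twos c) + card (ones c))"
    using False assms(3) by auto
  show ?thesis
    unfolding elem_sym_prod_coeff_eq[of N "Suc r"] elem_sym_prod_coeff_eq[of N r]
      if_not_P[OF False] if_not_P[OF shifted] by simp
qed

lemma sum_alternating_pairs:
  fixes f :: "nat \<Rightarrow> 'a::ab_group_add"
  assumes pairs: "\<And>m. odd m \<Longrightarrow> m < M \<Longrightarrow> f (Suc m) = - f m"
    and last: "odd M \<Longrightarrow> f M = 0"
  shows "sum f {1..M} = 0"
proof -
  have even_case: "sum f {1..2 * K} = 0" if "2 * K \<le> M" for K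
    using that
  proof (induction K)
    case (Suc K)
    have "{1..2 * Suc K} = insert (Suc (Suc (2 * K))) (insert (Suc (2 * K)) {1..2 * K})" by auto
    then show ?case using Suc pairs[of "Suc (2 * K)"] by simp
  qed simp
  show ?thesis
  proof (cases "even M")
    case True
    then show ?thesis using even_case[of "M div 2"] by simp
  next
    case False
    then obtain K where K: "M = Suc (2 * K)" by (metis oddE Suc_eq_plus1)
    then have "{1..M} = insert M {1..2 * K}" by auto
    then show ?thesis using False last even_case[of K] K by simp
  qed
qed

lemma swapped_term_sign_parity:
  fixes n k p q m r s t u :: nat
  assumes "r + s + k + p + q = 2 * n" "r + s = 2 * t + u" "even u \<Longrightarrow> even (r + t)"
  shows "even ((n + k) * (m + q) + (r * s + t)) \<longleftrightarrow> even ((n + k + t) * u + (n + k) * (m + p + k))"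
    (is "even ?A \<longleftrightarrow> even ?B")
proof -
  have "even (p + q + k + u)" using assms(1,2) by presburger
  then have first: "even ((n + k) * (2 * m + (p + q + k + u)))" by simp
  have second: "even (r * s + t * Suc u)"
  proof (cases "even u")
    case True
    then have "even r = even t" "even s = even t" using assms(2,3) by presburger+
    then show ?thesis using True by (auto simp: even_mult_iff)
  next
    case False
    then have "even r \<noteq> even s" using assms(2) by presburger
    then show ?thesis using False by (auto simp: even_mult_iff)
  qed
  have "?A + ?B = (n + k) * (2 * m + (p + q + k + u)) + (r * s + t * Suc u)"
    by (simp add: algebra_simps)
  then have "even (?A + ?B)"
    using first second by (simp only: dvd_add)
  then show ?thesis by (simp only: even_add[of ?A ?B])
qed

lemma alternating_coeff_sum_eq_0:
  fixes n k p q :: nat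
  assumes "k \<le> n" "p + q \<le> n" "odd (card (ones c))" "odd (n + k + card (twos c))"
  shows "(\<Sum>m\<in>{1..n - p - q}. (-1::'a::field) ^ ((n + k) * (m + p + k))
            * elem_sym_prod_coeff (n + 1) (n - k + m) (n - p - q - m) c) = 0"
proof (rule sum_alternating_pairs)
  let ?t = "card (twos c)"
  fix m assume m: "odd m" "m < n - p - q"
  have parity: "even (n - k + m + ?t)" using m(1) assms(1,4) by presburger
  have pos: "0 < n - p - q - m" using m(2) by simp
  have "n - k + Suc m = Suc (n - k + m)" "n - p - q - Suc m = n - p - q - m - 1"
    using assms(1) by simp_all
  have shift: "elem_sym_prod_coeff (n + 1) (n - k + Suc m) (n - p - q - Suc m) c
      = (-1) ^ ?t * (elem_sym_prod_coeff (n + 1) (n - k + m) (n - p - q - m) c :: 'a)"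
    unfolding \<open>n - k + Suc m = Suc (n - k + m)\<close> \<open>n - p - q - Suc m = n - p - q - m - 1\<close>
    by (rule elem_sym_prod_coeff_shift[OF assms(3) parity pos])
  have sign: "(-1::'a) ^ ((n + k) * (Suc m + p + k)) = (-1) ^ ((n + k) * (m + p + k)) * (-1) ^ (n + k)"
    by (simp add: algebra_simps power_add)
  have "(-1::'a) ^ ((n + k) * (Suc m + p + k))
        * elem_sym_prod_coeff (n + 1) (n - k + Suc m) (n - p - q - Suc m) c
      = ((-1) ^ (n + k) * (-1) ^ ?t)
        * ((-1) ^ ((n + k) * (m + p + k)) * elem_sym_prod_coeff (n + 1) (n - k + m) (n - p - q - m) c)"
    unfolding shift sign by (simp only: mult_ac)
  also have "(-1::'a) ^ (n + k) * (-1) ^ ?t = -1"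
    using assms(4) by (simp flip: power_add)
  finally show "(-1::'a) ^ ((n + k) * (Suc m + p + k))
        * elem_sym_prod_coeff (n + 1) (n - k + Suc m) (n - p - q - Suc m) c
      = - ((-1) ^ ((n + k) * (m + p + k)) * elem_sym_prod_coeff (n + 1) (n - k + m) (n - p - q - m) c)"
    by simp
next
  let ?t = "card (twos c)" and ?u = "card (ones c)" and ?M = "n - p - q"
  assume "odd ?M"
  have "even (n - k + ?M + ?t)" using \<open>odd ?M\<close> assms(1,4) by presburger
  moreover have "elem_sym_prod_coeff (n + 1) R 0 c = (0::'a)" if "even (R + ?t)" for R
  proof (rule ccontr)
    assume "elem_sym_prod_coeff (n + 1) R 0 c \<noteq> (0::'a)"
    \<comment> \<open>with the second factor trivial, the monomial has no doubled variables\<close>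
    then have "R \<le> ?t + ?u" "R = 2 * ?t + ?u"
      using elem_sym_prod_coeff_nonzero by fastforce+
    then have "R = ?u" "?t = 0" by linarith+
    then show False using that assms(3) by simp
  qed
  ultimately have "elem_sym_prod_coeff (n + 1) (n - k + ?M) 0 c = (0::'a)" by blast
  then show "(-1::'a) ^ ((n + k) * (?M + p + k)) * elem_sym_prod_coeff (n + 1) (n - k + ?M) (?M - ?M) c = 0"
    by simp
qed

lemma swapped_summand_eq:
  fixes n k p q m :: nat
  assumes "k \<le> n" "p + q \<le> n" "m \<le> n - p - q"
  shows "(-1) ^ ((n + k) * (m + q)) * elem_sym_prod_coeff (n + 1) (n - p - q - m) (n - k + m) c
       = (-1) ^ ((n + k + card (twos c)) * card (ones c))
         * ((-1) ^ ((n + k) * (m + p + k)) * (elem_sym_prod_coeff (n + 1) (n - k + m) (n - p - q - m) c :: 'a::field))"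
proof -
  let ?t = "card (twos c)" and ?u = "card (ones c)"
  let ?r = "n - k + m" and ?s = "n - p - q - m"
  let ?e = "elem_sym_prod_coeff (n + 1) ?r ?s c :: 'a"
  have "(-1) ^ ((n + k) * (m + q)) * (-1) ^ (?r * ?s + ?t) * ?e
      = (-1) ^ ((n + k + ?t) * ?u) * ((-1) ^ ((n + k) * (m + p + k)) * ?e)"
  proof (cases "?e = 0")
    case False
    have "?r + ?s = 2 * ?t + ?u" using elem_sym_prod_coeff_nonzero[OF False] by blast
    moreover have "even ?u \<Longrightarrow> even (?r + ?t)"
      using elem_sym_prod_coeff_eq_0_parity False by blast
    moreover have "?r + ?s + k + p + q = 2 * n" using assms by auto
    ultimately have "even ((n + k) * (m + q) + (?r * ?s + ?t))
        \<longleftrightarrow> even ((n + k + ?t) * ?u + (n + k) * (m + p + k))"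
      by (intro swapped_term_sign_parity)
    then have sign: "(-1::'a) ^ ((n + k) * (m + q) + (?r * ?s + ?t))
        = (-1) ^ ((n + k + ?t) * ?u) * (-1) ^ ((n + k) * (m + p + k))"
      unfolding power_add[symmetric] by (rule neg_one_power_parity_cong)
    have "(-1) ^ ((n + k) * (m + q)) * (-1) ^ (?r * ?s + ?t) * ?e
        = (-1) ^ ((n + k) * (m + q) + (?r * ?s + ?t)) * ?e"
      by (simp only: power_add)
    also have "\<dots> = (-1) ^ ((n + k + ?t) * ?u) * ((-1) ^ ((n + k) * (m + p + k)) * ?e)"
      unfolding sign by (simp only: mult.assoc)
    finally show ?thesis .
  qed simp
  then show ?thesis
    by (simp only: elem_sym_prod_coeff_swap[of "n + 1" ?s ?r] mult.assoc)
qed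

lemma elem_sym_prod_coeff_identity:
  fixes n k p q :: nat
  assumes "k \<le> n" "p + q \<le> n"
  shows "(\<Sum>m\<in>{1..n - p - q}. (-1::'a::field) ^ ((n + k) * (m + p + k))
            * elem_sym_prod_coeff (n + 1) (n - k + m) (n - p - q - m) c)
       = (\<Sum>m\<in>{1..n - p - q}. (-1) ^ ((n + k) * (m + q))
            * elem_sym_prod_coeff (n + 1) (n - p - q - m) (n - k + m) c)"
    (is "?lhs = ?rhs")
proof -
  let ?\<sigma> = "(-1::'a) ^ ((n + k + card (twos c)) * card (ones c))"
  have "?rhs = ?\<sigma> * ?lhs"
    unfolding sum_distrib_left by (rule sum.cong[OF refl], rule swapped_summand_eq[OF assms]) simp
  also have "\<dots> = ?lhs"
  proof (cases "even ((n + k + card (twos c)) * card (ones c))")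
    case False
    then have "?lhs = 0" by (intro alternating_coeff_sum_eq_0[OF assms]) auto
    then show ?thesis by simp
  qed simp
  finally show ?thesis ..
qed

theorem mainTheorem8:
  fixes n p q k :: nat
  assumes "p \<le> n" and "q \<le> n" and "k \<le> n" and "p + q \<le> n"
    and "(2::'a::field) \<noteq> 0"
  shows "opol_sum (\<lambda>m. opol_smult ((-1::'a) ^ ((n + k) * (m + p + k)))
            (opol_mult (n + 1) (elem_sym (n + 1) (n - k + m)) (elem_sym (n + 1) (n - p - q - m))))
          {1..n - p - q}
       = opol_sum (\<lambda>m. opol_smult ((-1::'a) ^ ((n + k) * (m + q)))
            (opol_mult (n + 1) (elem_sym (n + 1) (n - p - q - m)) (elem_sym (n + 1) (n - k + m))))
          {1..n - p - q}"
  unfolding opol_sum_def opol_smult_def opol_mult_elem_sym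
  by (rule ext) (rule elem_sym_prod_coeff_identity[OF assms(3,4)])

end
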